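(* Let $1<a_1<a_2$ be coprime integers. Then: (1) the sets $r_0^{-1}(\mathbb{Q})=\{t\in[1,\infty]: r_0(t)\in\mathbb{Q}\}$ and $\mathcal{T}=\{t\in(1,\infty): |P(t)|>\frac{1}{a_2},\ r_0(t)\in\mathbb{Q}\}$ are both countable; (2) $r_0$ is continuous; (3) for every $a>1$, $r_0^{-1}(\mathbb{Q})$ is dense in the ray $(a,\infty)$ (i.e. $(a,\infty)$ is contained in the closure of $r_0^{-1}(\mathbb{Q})$).
   Context: For $t\in[1,\infty)$ and $(u,v)\in\mathbb{R}^2$, $\|(u,v)\|_t=(|u|^t+|v|^t)^{1/t}$, and $\|(u,v)\|_\infty=\max(|u|,|v|)$. For $t\in[1,\infty]$ define $\mu_t(r)=\left\|\left(\frac{1-r}{a_1},\frac{r}{a_2}\right)\right\|_t$ for $r\in[0,1]$, $r_0(t)=\min\{r\in[0,1]:\mu_t(r)=\frac{1}{a_2}\}$ (a function $[1,\infty]\to[0,1]$), and $P(t)=\mu_t'(r_0(t))$ (derivative in $r$). *)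

theory Defs
  imports "HOL-Analysis.Analysis" "HOL-Library.Extended_Real"
begin

text \<open>The t-norm on R^2, t in [1,infinity] (t represented as an extended real;
  only t = ereal x with x >= 1 and t = PInfty are meaningful).\<close>
definition tnorm :: "ereal \<Rightarrow> real \<Rightarrow> real \<Rightarrow> real" where
  "tnorm t u v = (case t of
      ereal x \<Rightarrow> (\<bar>u\<bar> powr x + \<bar>v\<bar> powr x) powr (1 / x)
    | PInfty \<Rightarrow> max \<bar>u\<bar> \<bar>v\<bar>
    | MInfty \<Rightarrow> undefined)"

definition mu :: "int \<Rightarrow> int \<Rightarrow> ereal \<Rightarrow> real \<Rightarrow> real" where
  "mu a1 a2 t r = tnorm t ((1 - r) / real_of_int a1) (r / real_of_int a2)"

text \<open>r_0(t) = min {r in [0,1]. mu_t(r) = 1/a2}; the set is closed and contains 1,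
  so its infimum is its minimum.\<close>
definition r0 :: "int \<Rightarrow> int \<Rightarrow> ereal \<Rightarrow> real" where
  "r0 a1 a2 t = Inf {r \<in> {0..1}. mu a1 a2 t r = 1 / real_of_int a2}"

definition P :: "int \<Rightarrow> int \<Rightarrow> real \<Rightarrow> real" where
  "P a1 a2 t = deriv (\<lambda>r. mu a1 a2 (ereal t) r) (r0 a1 a2 (ereal t))"

end

theory Submission
  imports Defs
begin

text \<open>For \<open>t > 1\<close> the function \<open>r \<mapsto> ((1 - r)/a\<^sub>1)\<^sup>t + (r/a\<^sub>2)\<^sup>t\<close> (for \<open>t = \<infinity>\<close> simply
  \<open>\<mu>\<^sub>\<infinity>\<close>) is convex on \<open>[0,1]\<close>, lies above the level \<open>(1/a\<^sub>2)\<^sup>t\<close> at \<open>0\<close>, reaches it at \<open>1\<close>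
  and dips below it in between. Hence \<open>r\<^sub>0(t)\<close> is its only crossing of the level in \<open>(0,1)\<close>:
  \<open>\<mu>\<^sub>t(r) > 1/a\<^sub>2\<close> for \<open>r < r\<^sub>0(t)\<close> and \<open>\<mu>\<^sub>t(r) < 1/a\<^sub>2\<close> for \<open>r\<^sub>0(t) < r < 1\<close>. Since
  \<open>\<parallel>(u,v)\<parallel>\<^sub>t\<close> strictly decreases in \<open>t\<close> when \<open>u, v > 0\<close>, \<open>r\<^sub>0\<close> is strictly decreasing, so the
  preimage of \<open>\<rat>\<close> injects into \<open>\<rat>\<close>. Since \<open>t \<mapsto> \<mu>\<^sub>t(r)\<close> is continuous up to \<open>t = \<infinity>\<close>, these
  sign conditions persist near every \<open>t\<^sub>0\<close>, which is continuity of \<open>r\<^sub>0\<close>; density of the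
  preimage of \<open>\<rat>\<close> is then the intermediate value theorem.\<close>

lemma powr_less_powr_base_iff:
  fixes a b x :: real
  assumes "0 \<le> a" "0 \<le> b" "0 < x"
  shows "a powr x < b powr x \<longleftrightarrow> a < b"
  using assms by (metis not_le powr_less_mono2 powr_mono2 less_imp_le)

lemma tnorm_ereal [simp]: "tnorm (ereal x) u v = (\<bar>u\<bar> powr x + \<bar>v\<bar> powr x) powr (1 / x)"
  by (simp add: tnorm_def)

lemma tnorm_PInfty [simp]: "tnorm \<infinity> u v = max \<bar>u\<bar> \<bar>v\<bar>"
  by (simp add: tnorm_def)

lemma tnorm_ereal_less:
  fixes u v a b :: real
  assumes uv: "0 < u" "0 < v" and ab: "0 < a" "a < b"
  shows "tnorm (ereal b) u v < tnorm (ereal a) u v"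
proof -
  define N where "N = tnorm (ereal a) u v"
  have sum_pos: "0 < u powr a + v powr a"
    using uv by (simp add: add_pos_pos)
  then have N_pos: "0 < N"
    using uv by (simp add: N_def)
  have "N powr a = u powr a + v powr a"
    using uv ab sum_pos by (simp add: N_def powr_powr)
  then have unit: "(u / N) powr a + (v / N) powr a = 1"
    using uv N_pos sum_pos by (simp add: powr_divide add_divide_distrib[symmetric])
  have "0 < (u / N) powr a" "0 < (v / N) powr a"
    using uv N_pos by simp_all
  then have "(u / N) powr a < 1" "(v / N) powr a < 1"
    using unit by linarith+
  then have "u / N < 1" "v / N < 1"
    using powr_less_powr_base_iff[of _ 1 a] uv N_pos ab by simp_all
  then have "(u / N) powr b + (v / N) powr b < (u / N) powr a + (v / N) powr a"
    using uv N_pos ab by (intro add_strict_mono powr_less_mono') auto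
  then have "u powr b + v powr b < N powr b"
    using unit uv N_pos sum_pos by (simp add: powr_divide add_divide_distrib[symmetric] divide_less_eq)
  then have "(u powr b + v powr b) powr (1 / b) < (N powr b) powr (1 / b)"
    using uv N_pos ab by (simp add: powr_less_powr_base_iff)
  then show ?thesis
    using uv N_pos ab by (simp add: N_def powr_powr)
qed

lemma tnorm_PInfty_less:
  fixes u v x :: real
  assumes "0 < u" "0 < v" "0 < x"
  shows "tnorm \<infinity> u v < tnorm (ereal x) u v"
proof -
  have "max u v powr x < u powr x + v powr x"
    using assms by (cases "u \<le> v") (auto simp: max_def)
  then have "(max u v powr x) powr (1 / x) < (u powr x + v powr x) powr (1 / x)"
    using assms by (simp add: powr_less_powr_base_iff)
  then show ?thesis
    using assms by (simp add: powr_powr)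
qed

lemma tnorm_exponent_strict_antimono:
  fixes s t :: ereal
  assumes "0 < u" "0 < v" "0 < s" "s < t"
  shows "tnorm t u v < tnorm s u v"
proof -
  obtain a where s: "s = ereal a" and "0 < a"
    using assms by (cases s) auto
  then show ?thesis
    using assms tnorm_ereal_less[of u v a] tnorm_PInfty_less[of u v a] by (cases t) auto
qed

lemma tendsto_tnorm_at_top:
  fixes u v :: real
  assumes "0 < u" "0 < v"
  shows "((\<lambda>x. tnorm (ereal x) u v) \<longlongrightarrow> max u v) at_top"
proof (rule tendsto_sandwich)
  show "\<forall>\<^sub>F x in at_top. max u v \<le> tnorm (ereal x) u v"
    using eventually_gt_at_top[of 0]
    by eventually_elim (use assms tnorm_PInfty_less in fastforce)
  have bound: "tnorm (ereal x) u v \<le> 2 powr (1 / x) * max u v" if "0 < x" for x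
  proof -
    have "u powr x + v powr x \<le> 2 * max u v powr x"
      using assms that powr_mono2[of x u "max u v"] powr_mono2[of x v "max u v"] by simp
    then have "(u powr x + v powr x) powr (1 / x) \<le> (2 * max u v powr x) powr (1 / x)"
      using assms that by (intro powr_mono2) auto
    then show ?thesis
      using assms that by (simp add: powr_mult powr_powr)
  qed
  show "\<forall>\<^sub>F x in at_top. tnorm (ereal x) u v \<le> 2 powr (1 / x) * max u v"
    using eventually_gt_at_top[of 0] by (rule eventually_mono) (rule bound)
  have "((\<lambda>x::real. 2 powr (1 / x) * max u v) \<longlongrightarrow> 2 powr 0 * max u v) at_top"
    by (intro tendsto_intros tendsto_divide_0[OF tendsto_const]
        filterlim_at_top_imp_at_infinity[OF filterlim_ident]) auto
  then show "((\<lambda>x::real. 2 powr (1 / x) * max u v) \<longlongrightarrow> max u v) at_top"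
    by simp
qed (rule tendsto_const)

lemma continuous_on_tnorm_exponent:
  fixes u v :: real
  assumes "0 < u" "0 < v"
  shows "continuous_on {0<..} (\<lambda>t. tnorm t u v)"
proof (rule continuous_at_imp_continuous_on, rule ballI)
  fix t :: ereal
  assume "t \<in> {0<..}"
  then show "isCont (\<lambda>t. tnorm t u v) t"
  proof (cases t)
    case (real x)
    with \<open>t \<in> {0<..}\<close> have "0 < x" by simp
    then have "((\<lambda>y. tnorm (ereal y) u v) \<longlongrightarrow> tnorm (ereal x) u v) (at x)"
      using assms by (simp add: abs_of_pos) (intro tendsto_intros; simp add: add_pos_pos)
    then show ?thesis
      unfolding real continuous_at unfolding at_ereal filterlim_filtermap by simp
  next
    case PInf
    then show ?thesis
      using tendsto_tnorm_at_top[OF assms] assms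
      unfolding PInf continuous_at unfolding at_infty_ereal_eq_at_top filterlim_filtermap by simp
  qed (use \<open>t \<in> {0<..}\<close> in simp)
qed

lemma convex_on_powr_nonneg:
  fixes x :: real
  assumes "1 \<le> x"
  shows "convex_on {0..} (\<lambda>s. s powr x)"
proof (rule convex_on_linorderI)
  fix t s w :: real
  assume t: "0 < t" "t < 1" and s: "s \<in> {0..}" and w: "w \<in> {0..}" and "s < w"
  show "((1 - t) *\<^sub>R s + t *\<^sub>R w) powr x \<le> (1 - t) * s powr x + t * w powr x"
  proof (cases "s = 0")
    case True
    have "t powr x * w powr x \<le> t * w powr x"
      using t assms by (intro mult_right_mono powr_le_one_le) auto
    then show ?thesis
      using True t w by (simp add: powr_mult)
  next
    case False
    then show ?thesis
      using convex_onD[OF powr_convex[OF assms]] t s w \<open>s < w\<close> by simp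
  qed
qed simp

lemma convex_on_compose_affine:
  fixes f :: "real \<Rightarrow> real" and g :: "'a::real_vector \<Rightarrow> real"
  assumes f: "convex_on T f" and g: "convex_on S g" "concave_on S g" and gS: "g ` S \<subseteq> T"
  shows "convex_on S (\<lambda>x. f (g x))"
proof (rule convex_onI)
  fix t :: real and x y
  assume t: "0 < t" "t < 1" and xy: "x \<in> S" "y \<in> S"
  have "g ((1 - t) *\<^sub>R x + t *\<^sub>R y) = (1 - t) * g x + t * g y"
    using convex_onD[OF g(1)] concave_onD[OF g(2)] t xy by (intro antisym) auto
  then show "f (g ((1 - t) *\<^sub>R x + t *\<^sub>R y)) \<le> (1 - t) * f (g x) + t * f (g y)"
    using convex_onD[OF f, of t "g x" "g y"] t xy gS by auto
qed (rule convex_on_imp_convex[OF g(1)])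

lemma convex_on_max:
  fixes f g :: "'a::real_vector \<Rightarrow> real"
  assumes f: "convex_on S f" and g: "convex_on S g"
  shows "convex_on S (\<lambda>x. max (f x) (g x))"
proof (rule convex_onI)
  fix t :: real and x y
  assume t: "0 < t" "t < 1" and xy: "x \<in> S" "y \<in> S"
  have "(1 - t) * f x + t * f y \<le> (1 - t) * max (f x) (g x) + t * max (f y) (g y)"
    "(1 - t) * g x + t * g y \<le> (1 - t) * max (f x) (g x) + t * max (f y) (g y)"
    using t by (intro add_mono mult_left_mono; simp)+
  then show "max (f ((1 - t) *\<^sub>R x + t *\<^sub>R y)) (g ((1 - t) *\<^sub>R x + t *\<^sub>R y))
      \<le> (1 - t) * max (f x) (g x) + t * max (f y) (g y)"
    using convex_onD[OF f, of t x y] convex_onD[OF g, of t x y] t xy by simp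
qed (rule convex_on_imp_convex[OF f])

lemma convex_on_less_between:
  fixes f :: "real \<Rightarrow> real"
  assumes "convex_on S f" "u \<in> S" "w \<in> S" "u < r" "r < w"
    and "f u \<le> c" "f w \<le> c" "f u < c \<or> f w < c"
  shows "f r < c"
proof -
  define l where "l = (r - u) / (w - u)"
  have l: "0 < l" "l < 1"
    using assms(4,5) by (simp_all add: l_def field_simps)
  have "l * (w - u) = r - u"
    using assms(4,5) by (simp add: l_def)
  then have "r = (1 - l) *\<^sub>R u + l *\<^sub>R w"
    by (simp add: algebra_simps)
  then have "f r \<le> (1 - l) * f u + l * f w"
    using convex_onD[OF assms(1)] l assms(2,3) by simp
  also have "\<dots> < (1 - l) * c + l * c"
    using l assms(6-8) by (auto intro: add_less_le_mono add_le_less_mono mult_left_mono)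
  finally show ?thesis
    by (simp add: algebra_simps)
qed

lemma continuous_on_Inf_level_set:
  fixes f :: "real \<Rightarrow> real"
  assumes cont: "continuous_on {a..b} f" and start: "c < f a" and stop: "f b = c" and "a \<le> b"
  defines "R \<equiv> Inf {r \<in> {a..b}. f r = c}"
  shows "a < R" "R \<le> b" "f R = c" "\<And>r. a \<le> r \<Longrightarrow> r < R \<Longrightarrow> c < f r"
proof -
  let ?Z = "{r \<in> {a..b}. f r = c}"
  have bdd: "bdd_below ?Z"
    by (rule bdd_belowI[of _ a]) simp
  have "R \<in> ?Z"
    unfolding R_def using bdd stop \<open>a \<le> b\<close> continuous_closed_preimage_constant[OF cont]
    by (intro closed_contains_Inf) auto
  then show R: "R \<le> b" "f R = c"
    by auto
  with \<open>R \<in> ?Z\<close> start show "a < R"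
    by (cases "a = R") auto
  show "c < f r" if r: "a \<le> r" "r < R" for r
  proof (rule ccontr)
    assume "\<not> c < f r"
    moreover have "continuous_on {a..r} f"
      by (rule continuous_on_subset[OF cont]) (use r R in auto)
    ultimately obtain z where "a \<le> z" "z \<le> r" "f z = c"
      using IVT2'[of f r c a] start r by auto
    then have "R \<le> z"
      unfolding R_def using bdd r R by (intro cInf_lower) auto
    with \<open>z \<le> r\<close> \<open>r < R\<close> show False
      by simp
  qed
qed

lemma convex_on_Inf_crossing:
  fixes f :: "real \<Rightarrow> real"
  assumes convex: "convex_on {a..b} f" and cont: "continuous_on {a..b} f"
    and start: "c < f a" and stop: "f b = c" and dip: "a < y" "y < b" "f y < c"
  defines "R \<equiv> Inf {r \<in> {a..b}. f r = c}"
  shows "a < R" "R < b"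
    and "\<And>r. r \<in> {a..<b} \<Longrightarrow> c < f r \<longleftrightarrow> r < R"
    and "\<And>r. r \<in> {a..<b} \<Longrightarrow> f r < c \<longleftrightarrow> R < r"
proof -
  have "a \<le> b"
    using dip by simp
  note R = continuous_on_Inf_level_set[OF cont start stop this, folded R_def]
  show "a < R"
    using R dip by simp
  have "R < y"
    using R(4)[of y] R(1,3) dip by (cases "y < R") (auto simp: not_less order.order_iff_strict)
  then show "R < b"
    using dip by simp
  have above: "f r < c" if "R < r" "r < b" for r
  proof (cases r y rule: linorder_cases)
    case less
    then show ?thesis
      using convex_on_less_between[OF convex, of R y r c] R \<open>R < y\<close> that dip by auto
  next
    case greater
    then show ?thesis
      using convex_on_less_between[OF convex, of y b r c] R that dip stop by auto
  qed (use dip in simp)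
  show "c < f r \<longleftrightarrow> r < R" if "r \<in> {a..<b}" for r
    using R(3) R(4)[of r] above[of r] dip that by (cases r R rule: linorder_cases) auto
  show "f r < c \<longleftrightarrow> R < r" if "r \<in> {a..<b}" for r
    using R(3) R(4)[of r] above[of r] dip that by (cases r R rule: linorder_cases) auto
qed

lemma convex_on_powr_segment:
  fixes p q x :: real
  assumes "0 < p" "0 < q" "1 \<le> x"
  shows "convex_on {0..1} (\<lambda>r. ((1 - r) / p) powr x + (r / q) powr x)"
proof (rule convex_on_add)
  show "convex_on {0..1} (\<lambda>r. ((1 - r) / p) powr x)" "convex_on {0..1} (\<lambda>r. (r / q) powr x)"
    using assms
    by (intro convex_on_compose_affine[OF convex_on_powr_nonneg]
        convex_on_cdiv concave_on_cdiv convex_on_diff concave_on_diff;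
        force simp: convex_on_const concave_on_const convex_on_ident concave_on_ident)+
qed

lemma powr_sum_dips_below:
  fixes p q x :: real
  assumes pq: "0 < p" "p < q" and x: "1 < x"
  obtains y where "0 < y" "y < 1" "((1 - y) / p) powr x + (y / q) powr x < (1 / q) powr x"
proof -
  (* y = 1 - s with s^(x-1) < (p/q)^x: then (s/p)^x < s/q^x, while ((1-s)/q)^x <= (1-s)/q^x *)
  define d where "d = (p / q) powr (x / (x - 1))"
  define s where "s = d / 2"
  have "d < 1 powr (x / (x - 1))"
    unfolding d_def using pq x by (intro powr_less_mono2) auto
  then have s: "0 < s" "s < 1"
    using pq by (simp_all add: s_def d_def)
  have "s powr (x - 1) < d powr (x - 1)"
    using s x by (intro powr_less_mono2) (auto simp: s_def)
  also have "\<dots> = p powr x / q powr x"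
    using pq x by (simp add: d_def powr_powr powr_divide)
  finally have "s * s powr (x - 1) / p powr x < s * (p powr x / q powr x) / p powr x"
    using s pq by (intro divide_strict_right_mono mult_strict_left_mono) auto
  then have small: "(s / p) powr x < s / q powr x"
    using s pq by (simp add: powr_divide powr_mult_base)
  have "(1 - s) powr x \<le> 1 - s"
    using s x by (intro powr_le_one_le) auto
  then have "((1 - s) / q) powr x \<le> (1 - s) / q powr x"
    using s pq by (simp add: powr_divide divide_right_mono)
  with small have "(s / p) powr x + ((1 - s) / q) powr x < 1 / q powr x"
    by (simp add: diff_divide_distrib)
  then show ?thesis
    using that[of "1 - s"] s pq by (simp add: powr_divide)
qed

lemma open_subset_closure_preimage_Rats:
  fixes g :: "real \<Rightarrow> real"
  assumes S: "open S" and cont: "continuous_on S g" and inj: "inj_on g S"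
  shows "S \<subseteq> closure {x \<in> S. g x \<in> \<rat>}"
proof
  fix t assume "t \<in> S"
  then obtain d where "0 < d" and ball: "ball t d \<subseteq> S"
    using S openE by blast
  show "t \<in> closure {x \<in> S. g x \<in> \<rat>}"
    unfolding closure_approachable
  proof (intro allI impI)
    fix e :: real assume "0 < e"
    define s where "s = t + min d e / 2"
    have ts: "t < s" "s - t < e"
      using \<open>0 < d\<close> \<open>0 < e\<close> by (auto simp: s_def)
    have seg: "{t..s} \<subseteq> S"
      using ball \<open>0 < d\<close> by (force simp: s_def dist_real_def)
    moreover have "t \<in> {t..s}" "s \<in> {t..s}"
      using ts by simp_all
    ultimately have "g t \<noteq> g s"
      using inj ts by (metis inj_onD subsetD less_irrefl)
    then have "min (g t) (g s) < max (g t) (g s)"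
      by linarith
    then obtain \<rho> where "\<rho> \<in> \<rat>" "min (g t) (g s) < \<rho>" "\<rho> < max (g t) (g s)"
      using Rats_dense_in_real by blast
    moreover have "continuous_on (closed_segment t s) g"
      using continuous_on_subset[OF cont seg] ts by (simp add: closed_segment_eq_real_ivl)
    ultimately obtain x where "x \<in> {t..s}" "g x = \<rho>"
      using IVT'_closed_segment_real[of \<rho> g t s] ts
      by (auto simp: closed_segment_eq_real_ivl min_def max_def split: if_splits)
    then show "\<exists>x' \<in> {x \<in> S. g x \<in> \<rat>}. dist x' t < e"
      using seg ts \<open>\<rho> \<in> \<rat>\<close> by (intro bexI[of _ x]) (auto simp: dist_real_def)
  qed
qed

locale weight_pair =
  fixes a1 a2 :: int
  assumes a1_pos: "0 < a1" and a1_less_a2: "a1 < a2"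
begin

abbreviation p :: real where "p \<equiv> real_of_int a1"
abbreviation q :: real where "q \<equiv> real_of_int a2"

lemma p_pos: "0 < p" and p_less_q: "p < q"
  using a1_pos a1_less_a2 by simp_all

lemma mu_ereal:
  assumes "r \<in> {0..1}"
  shows "mu a1 a2 (ereal x) r = (((1 - r) / p) powr x + (r / q) powr x) powr (1 / x)"
  using assms p_pos p_less_q by (simp add: mu_def)

lemma mu_PInfty:
  assumes "r \<in> {0..1}"
  shows "mu a1 a2 \<infinity> r = max ((1 - r) / p) (r / q)"
  using assms p_pos p_less_q by (simp add: mu_def)

lemma mu_exponent_strict_antimono:
  assumes "r \<in> {0<..<1}" "0 < s" "s < t"
  shows "mu a1 a2 t r < mu a1 a2 s r"
  unfolding mu_def using assms p_pos p_less_q by (intro tnorm_exponent_strict_antimono) auto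

lemma continuous_on_mu_exponent:
  assumes "r \<in> {0<..<1}"
  shows "continuous_on {0<..} (\<lambda>t. mu a1 a2 t r)"
  unfolding mu_def using assms p_pos p_less_q by (intro continuous_on_tnorm_exponent) auto

lemma mu_one:
  assumes "r \<in> {0..1}"
  shows "mu a1 a2 1 r = (1 - r) / p + r / q"
  using mu_ereal[OF assms, of 1] assms p_pos p_less_q by (simp add: one_ereal_def)

lemma level_less_mu_one:
  assumes "r \<in> {0..<1}"
  shows "1 / q < mu a1 a2 1 r"
proof -
  have "(1 - r) / q < (1 - r) / p"
    using assms p_pos p_less_q by (intro divide_strict_left_mono) auto
  then show ?thesis
    using assms mu_one[of r] by (simp add: diff_divide_distrib)
qed

lemma r0_one: "r0 a1 a2 1 = 1"
proof -
  have "{r \<in> {0..1}. mu a1 a2 1 r = 1 / q} = {1}"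
    using level_less_mu_one mu_one[of 1] by force
  then show ?thesis
    by (simp add: r0_def)
qed

lemma level_less_mu_ereal_iff:
  assumes "0 < x" "r \<in> {0..1}"
  shows "1 / q < mu a1 a2 (ereal x) r \<longleftrightarrow> (1 / q) powr x < ((1 - r) / p) powr x + (r / q) powr x"
proof -
  have "((1 / q) powr x) powr (1 / x) < (((1 - r) / p) powr x + (r / q) powr x) powr (1 / x)
      \<longleftrightarrow> (1 / q) powr x < ((1 - r) / p) powr x + (r / q) powr x"
    using assms by (intro powr_less_powr_base_iff) auto
  then show ?thesis
    using assms p_pos p_less_q by (simp add: mu_ereal powr_powr)
qed

lemma mu_ereal_less_level_iff:
  assumes "0 < x" "r \<in> {0..1}"
  shows "mu a1 a2 (ereal x) r < 1 / q \<longleftrightarrow> ((1 - r) / p) powr x + (r / q) powr x < (1 / q) powr x"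
proof -
  have "(((1 - r) / p) powr x + (r / q) powr x) powr (1 / x) < ((1 / q) powr x) powr (1 / x)
      \<longleftrightarrow> ((1 - r) / p) powr x + (r / q) powr x < (1 / q) powr x"
    using assms by (intro powr_less_powr_base_iff) auto
  then show ?thesis
    using assms p_pos p_less_q by (simp add: mu_ereal powr_powr)
qed

lemma r0_crossing_ereal:
  assumes x: "1 < x"
  shows "0 < r0 a1 a2 (ereal x)" "r0 a1 a2 (ereal x) < 1"
    and "\<And>r. r \<in> {0..<1} \<Longrightarrow> 1 / q < mu a1 a2 (ereal x) r \<longleftrightarrow> r < r0 a1 a2 (ereal x)"
    and "\<And>r. r \<in> {0..<1} \<Longrightarrow> mu a1 a2 (ereal x) r < 1 / q \<longleftrightarrow> r0 a1 a2 (ereal x) < r"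
proof -
  define A where "A r = ((1 - r) / p) powr x + (r / q) powr x" for r
  define C where "C = (1 / q) powr x"
  have level_less_iff: "1 / q < mu a1 a2 (ereal x) r \<longleftrightarrow> C < A r"
    and less_level_iff: "mu a1 a2 (ereal x) r < 1 / q \<longleftrightarrow> A r < C" if "r \<in> {0..1}" for r
    using level_less_mu_ereal_iff[OF _ that] mu_ereal_less_level_iff[OF _ that] x
    by (simp_all add: A_def C_def)
  then have "mu a1 a2 (ereal x) r = 1 / q \<longleftrightarrow> A r = C" if "r \<in> {0..1}" for r
    using level_less_iff[OF that] less_level_iff[OF that] by (metis linorder_neq_iff)
  then have "{r \<in> {0..1}. mu a1 a2 (ereal x) r = 1 / q} = {r \<in> {0..1}. A r = C}"
    by auto
  then have r0_A: "r0 a1 a2 (ereal x) = Inf {r \<in> {0..1}. A r = C}"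
    by (simp add: r0_def)
  have convex: "convex_on {0..1} A"
    unfolding A_def using x p_pos p_less_q by (intro convex_on_powr_segment) auto
  have cont: "continuous_on {0..1} A"
    unfolding A_def using x p_pos p_less_q
    by (intro continuous_on_add continuous_on_powr' continuous_intros) auto
  have "C < (1 / p) powr x"
    unfolding C_def using x p_pos p_less_q by (intro powr_less_mono2 divide_strict_left_mono) auto
  then have start: "C < A 0"
    using x by (simp add: A_def)
  have stop: "A 1 = C"
    using x by (simp add: A_def C_def)
  obtain y where "0 < y" "y < 1" "A y < C"
    using powr_sum_dips_below[OF p_pos p_less_q x] unfolding A_def C_def by blast
  note crossing = convex_on_Inf_crossing[OF convex cont start stop this, folded r0_A]
  show "0 < r0 a1 a2 (ereal x)" "r0 a1 a2 (ereal x) < 1"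
    using crossing(1,2) by simp_all
  show "1 / q < mu a1 a2 (ereal x) r \<longleftrightarrow> r < r0 a1 a2 (ereal x)"
    and "mu a1 a2 (ereal x) r < 1 / q \<longleftrightarrow> r0 a1 a2 (ereal x) < r" if "r \<in> {0..<1}" for r
    using crossing(3,4)[OF that] level_less_iff[of r] less_level_iff[of r] that by auto
qed

lemma r0_crossing_PInfty:
  shows "0 < r0 a1 a2 \<infinity>" "r0 a1 a2 \<infinity> < 1"
    and "\<And>r. r \<in> {0..<1} \<Longrightarrow> 1 / q < mu a1 a2 \<infinity> r \<longleftrightarrow> r < r0 a1 a2 \<infinity>"
    and "\<And>r. r \<in> {0..<1} \<Longrightarrow> mu a1 a2 \<infinity> r < 1 / q \<longleftrightarrow> r0 a1 a2 \<infinity> < r"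
proof -
  define f where "f r = max ((1 - r) / p) (r / q)" for r
  have "{r \<in> {0..1}. mu a1 a2 \<infinity> r = 1 / q} = {r \<in> {0..1}. f r = 1 / q}"
    by (auto simp: mu_PInfty f_def)
  then have r0_f: "r0 a1 a2 \<infinity> = Inf {r \<in> {0..1}. f r = 1 / q}"
    by (simp add: r0_def)
  have convex: "convex_on {0..1} f"
    unfolding f_def using p_pos p_less_q
    by (intro convex_on_max convex_on_cdiv convex_on_diff;
        force simp: convex_on_const concave_on_ident convex_on_ident)
  have cont: "continuous_on {0..1} f"
    unfolding f_def using p_pos p_less_q by (intro continuous_intros) auto
  have start: "1 / q < f 0"
    using p_pos p_less_q by (simp add: f_def divide_strict_left_mono)
  have stop: "f 1 = 1 / q"
    using p_pos p_less_q by (simp add: f_def)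
  define y where "y = 1 - p / (2 * q)"
  have "0 < y" "y < 1" "f y < 1 / q"
    using p_pos p_less_q by (auto simp: y_def f_def field_simps)
  note crossing = convex_on_Inf_crossing[OF convex cont start stop this, folded r0_f]
  show "0 < r0 a1 a2 \<infinity>" "r0 a1 a2 \<infinity> < 1"
    using crossing(1,2) by simp_all
  show "1 / q < mu a1 a2 \<infinity> r \<longleftrightarrow> r < r0 a1 a2 \<infinity>"
    and "mu a1 a2 \<infinity> r < 1 / q \<longleftrightarrow> r0 a1 a2 \<infinity> < r" if "r \<in> {0..<1}" for r
    using crossing(3,4)[OF that] that by (simp_all add: mu_PInfty f_def)
qed

lemma r0_crossing:
  assumes "1 < t"
  shows "0 < r0 a1 a2 t" "r0 a1 a2 t < 1"
    and "\<And>r. r \<in> {0..<1} \<Longrightarrow> 1 / q < mu a1 a2 t r \<longleftrightarrow> r < r0 a1 a2 t"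
    and "\<And>r. r \<in> {0..<1} \<Longrightarrow> mu a1 a2 t r < 1 / q \<longleftrightarrow> r0 a1 a2 t < r"
  using assms r0_crossing_ereal r0_crossing_PInfty by (cases t; simp)+

lemma r0_pos: "1 \<le> t \<Longrightarrow> 0 < r0 a1 a2 t"
  using r0_crossing(1) r0_one by (cases "t = 1") auto

lemma r0_le_one: "1 \<le> t \<Longrightarrow> r0 a1 a2 t \<le> 1"
  using r0_crossing(2) r0_one by (cases "t = 1") (auto intro: less_imp_le)

lemma level_less_mu_iff:
  "1 \<le> t \<Longrightarrow> r \<in> {0..<1} \<Longrightarrow> 1 / q < mu a1 a2 t r \<longleftrightarrow> r < r0 a1 a2 t"
  using r0_crossing(3) r0_one level_less_mu_one by (cases "t = 1") auto

lemma mu_less_level_iff: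
  "1 \<le> t \<Longrightarrow> r \<in> {0..<1} \<Longrightarrow> mu a1 a2 t r < 1 / q \<longleftrightarrow> r0 a1 a2 t < r"
  using r0_crossing(4) r0_one level_less_mu_one by (cases "t = 1") (auto dest: less_asym)

lemma r0_strict_antimono:
  assumes "1 \<le> s" "s < t"
  shows "r0 a1 a2 t < r0 a1 a2 s"
proof (cases "r0 a1 a2 s = 1")
  case True
  then show ?thesis
    using r0_crossing(2)[of t] assms by simp
next
  case False
  let ?R = "r0 a1 a2 s"
  have R: "?R \<in> {0<..<1}"
    using r0_pos[of s] r0_le_one[of s] False assms by simp
  then have "\<not> 1 / q < mu a1 a2 s ?R"
    using level_less_mu_iff[of s ?R] assms by simp
  moreover have "0 < s"
    using assms(1) by (auto intro: order_less_le_trans[of 0 1])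
  then have "mu a1 a2 t ?R < mu a1 a2 s ?R"
    using mu_exponent_strict_antimono[OF R] assms(2) by simp
  ultimately have "mu a1 a2 t ?R < 1 / q"
    by simp
  then show ?thesis
    using mu_less_level_iff[of t ?R] assms R by simp
qed

lemma tendsto_mu_exponent:
  assumes "r \<in> {0<..<1}" "1 \<le> t0"
  shows "((\<lambda>t. mu a1 a2 t r) \<longlongrightarrow> mu a1 a2 t0 r) (at t0 within {t. 1 \<le> t})"
proof -
  have "continuous_on {t. 1 \<le> t} (\<lambda>t. mu a1 a2 t r)"
    by (rule continuous_on_subset[OF continuous_on_mu_exponent[OF assms(1)]])
      (auto intro: order_less_le_trans[of 0 1])
  then show ?thesis
    using assms(2) by (simp add: continuous_on_def)
qed

lemma eventually_less_r0:
  assumes "1 \<le> t0" "a < r0 a1 a2 t0"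
  shows "\<forall>\<^sub>F t in at t0 within {t. 1 \<le> t}. a < r0 a1 a2 t"
proof -
  define r where "r = (max a 0 + r0 a1 a2 t0) / 2"
  have r: "r \<in> {0<..<1}" "a < r" "r < r0 a1 a2 t0"
    using assms r0_pos[of t0] r0_le_one[of t0] by (auto simp: r_def)
  then have "1 / q < mu a1 a2 t0 r"
    using level_less_mu_iff[of t0 r] assms by simp
  then have "\<forall>\<^sub>F t in at t0 within {t. 1 \<le> t}. 1 / q < mu a1 a2 t r"
    by (rule order_tendstoD(1)[OF tendsto_mu_exponent[OF r(1) assms(1)]])
  moreover have "\<forall>\<^sub>F t in at t0 within {t. 1 \<le> t}. 1 \<le> t"
    by (simp add: eventually_at_filter)
  ultimately show ?thesis
    by eventually_elim (use r level_less_mu_iff in force)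
qed

lemma eventually_r0_less:
  assumes "1 \<le> t0" "r0 a1 a2 t0 < b"
  shows "\<forall>\<^sub>F t in at t0 within {t. 1 \<le> t}. r0 a1 a2 t < b"
proof -
  have domain: "\<forall>\<^sub>F t in at t0 within {t. 1 \<le> t}. 1 \<le> t"
    by (simp add: eventually_at_filter)
  show ?thesis
  proof (cases "1 < b")
    case True
    from domain show ?thesis
      by eventually_elim (use True r0_le_one in force)
  next
    case False
    define r where "r = (r0 a1 a2 t0 + b) / 2"
    have r: "r \<in> {0<..<1}" "r0 a1 a2 t0 < r" "r < b"
      using assms False r0_pos[of t0] by (auto simp: r_def)
    then have "mu a1 a2 t0 r < 1 / q"
      using mu_less_level_iff[of t0 r] assms by simp
    then have "\<forall>\<^sub>F t in at t0 within {t. 1 \<le> t}. mu a1 a2 t r < 1 / q"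
      by (rule order_tendstoD(2)[OF tendsto_mu_exponent[OF r(1) assms(1)]])
    with domain show ?thesis
      by eventually_elim (use r mu_less_level_iff in force)
  qed
qed

lemma continuous_on_r0: "continuous_on {t. 1 \<le> t} (r0 a1 a2)"
  unfolding continuous_on_def
  by (auto intro!: order_tendstoI eventually_less_r0 eventually_r0_less)

lemma inj_on_r0: "inj_on (r0 a1 a2) {t. 1 \<le> t}"
  by (rule linorder_inj_onI') (use r0_strict_antimono in force)

lemma countable_r0_preimage_Rats: "countable {t. 1 \<le> t \<and> r0 a1 a2 t \<in> \<rat>}"
proof (rule countable_image_inj_on)
  show "countable (r0 a1 a2 ` {t. 1 \<le> t \<and> r0 a1 a2 t \<in> \<rat>})"
    by (rule countable_subset[OF _ countable_rat]) auto
  show "inj_on (r0 a1 a2) {t. 1 \<le> t \<and> r0 a1 a2 t \<in> \<rat>}"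
    by (rule inj_on_subset[OF inj_on_r0]) auto
qed

lemma ereal_in_closure_r0_preimage_Rats:
  assumes "1 < x"
  shows "ereal x \<in> closure {t. 1 \<le> t \<and> r0 a1 a2 t \<in> \<rat>}"
proof -
  let ?D = "{x \<in> {1<..}. r0 a1 a2 (ereal x) \<in> \<rat>}"
  have cont: "continuous_on {1<..} (\<lambda>x. r0 a1 a2 (ereal x))"
    by (rule continuous_on_compose2[OF continuous_on_r0 continuous_on_ereal[OF continuous_on_id]])
      auto
  have "inj_on (\<lambda>x. r0 a1 a2 (ereal x)) {1<..}"
  proof (rule linorder_inj_onI')
    fix i j :: real
    assume "i \<in> {1<..}" "i < j"
    then show "r0 a1 a2 (ereal i) \<noteq> r0 a1 a2 (ereal j)"
      using r0_strict_antimono[of "ereal i" "ereal j"] by simp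
  qed
  then have "x \<in> closure ?D"
    using open_subset_closure_preimage_Rats[OF open_greaterThan cont] assms by auto
  moreover have "ereal ` closure ?D \<subseteq> closure (ereal ` ?D)"
    by (rule continuous_image_closure_subset[of UNIV]) (auto intro: continuous_on_ereal continuous_on_id)
  moreover have "ereal ` ?D \<subseteq> {t. 1 \<le> t \<and> r0 a1 a2 t \<in> \<rat>}"
    by auto
  ultimately show ?thesis
    using closure_mono by blast
qed

end

theorem corollary1:
  fixes a1 a2 :: int
  assumes "1 < a1" and "a1 < a2" and "coprime a1 a2"
  shows "countable {t :: ereal. 1 \<le> t \<and> r0 a1 a2 t \<in> \<rat>}
       \<and> countable {t :: real. 1 < t \<and> \<bar>P a1 a2 t\<bar> > 1 / real_of_int a2
                              \<and> r0 a1 a2 (ereal t) \<in> \<rat>}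
       \<and> continuous_on {t :: ereal. 1 \<le> t} (r0 a1 a2)
       \<and> (\<forall>a :: real. 1 < a \<longrightarrow>
            {ereal a <..< \<infinity>} \<subseteq> closure {t :: ereal. 1 \<le> t \<and> r0 a1 a2 t \<in> \<rat>})"
proof -
  interpret weight_pair a1 a2
    using assms(1,2) by unfold_locales simp_all
  have "countable {t :: real. 1 < t \<and> \<bar>P a1 a2 t\<bar> > 1 / real_of_int a2 \<and> r0 a1 a2 (ereal t) \<in> \<rat>}"
    by (rule countable_image_inj_on[of ereal, OF countable_subset[OF _ countable_r0_preimage_Rats]])
      (auto intro: inj_onI)
  moreover have "{ereal a <..< \<infinity>} \<subseteq> closure {t. 1 \<le> t \<and> r0 a1 a2 t \<in> \<rat>}" if "1 < a" for a
  proof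
    fix t assume "t \<in> {ereal a <..< \<infinity>}"
    then obtain x where "t = ereal x" "a < x"
      by (cases t) auto
    then show "t \<in> closure {t. 1 \<le> t \<and> r0 a1 a2 t \<in> \<rat>}"
      using ereal_in_closure_r0_preimage_Rats[of x] that by simp
  qed
  ultimately show ?thesis
    using countable_r0_preimage_Rats continuous_on_r0 by blast
qed

end
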